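(* Let $(X,|\cdot|_X)$ be a Banach space, $T>0$, and let $A\colon D(A)\subset X\to X$ be the infinitesimal generator of a $C_0$-semigroup $\{S(t): t\ge0\}$ on $X$. Let $C_A\ge0$ be a constant with $|S(t)|_{\mathcal L(X)}\le C_A$ for all $t\in[0,2T]$. Let $a,b,k>0$ and let $F,G\colon X^2\to X$ be continuous. Assume: (i) there are nonnegative constants $a_{11},a_{12},a_{21},a_{22}$ such that for all $x,\bar x,y,\bar y\in X$, $|F(x,y)-F(\bar x,\bar y)|_X\le a_{11}|x-\bar x|_X+a_{12}|y-\bar y|_X$ and $|G(x,y)-G(\bar x,\bar y)|_X\le a_{21}|x-\bar x|_X+a_{22}|y-\bar y|_X$; (ii) there exists $\theta\ge0$ such that the matrix \[ M(\theta):=C_A\begin{bmatrix}\frac1a+\left(1+\frac1a\right)Ta_{11}+\frac kaTa_{21} & \left(\left(1+\frac1a\right)a_{12}+\frac kaa_{22}\right)\frac{e^{\theta T}-1}{\theta}\\[3pt] Ta_{21} & a_{22}\frac{1-e^{-\theta T}}{\theta}\end{bmatrix} \] is convergent to zero. Then for every $\beta\in X$ there exists a unique pair $(x,y)\in C([0,T];X)^2$ with $y(0)=\beta$ such that for all $t\in[0,T]$ \[ x(t)=S(t)x(0)+\int_0^tS(t-s)F(x(s),y(s))\,ds,\qquad y(t)=S(t)y(0)+\int_0^tS(t-s)G(x(s),y(s))\,ds, \] and $x(T)-a\,x(0)=k\big(y(T)-b\,y(0)\big)$.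
   Context: $\mathcal L(X)$ is the space of bounded linear operators on $X$ with the operator norm. For $\theta=0$ the quotients $\frac{e^{\theta T}-1}{\theta}$ and $\frac{1-e^{-\theta T}}{\theta}$ are understood as their limit value $T$. A square matrix with nonnegative entries is convergent to zero if its powers tend to the zero matrix (equivalently, its spectral radius is $<1$). *)

theory Defs
  imports "HOL-Analysis.Analysis"
begin

text \<open>C_0-semigroup of bounded linear operators on a Banach space
  (values of S at negative times are irrelevant).\<close>
definition C0_semigroup :: "(real \<Rightarrow> ('a::banach \<Rightarrow>\<^sub>L 'a)) \<Rightarrow> bool" where
  "C0_semigroup S \<longleftrightarrow>
     S 0 = id_blinfun \<and>
     (\<forall>t s. 0 \<le> t \<longrightarrow> 0 \<le> s \<longrightarrow> S (t + s) = S t o\<^sub>L S s) \<and>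
     (\<forall>v. ((\<lambda>t. blinfun_apply (S t) v) \<longlongrightarrow> v) (at_right 0))"

definition is_generator :: "('a::banach \<Rightarrow> 'a) \<Rightarrow> 'a set \<Rightarrow> (real \<Rightarrow> ('a \<Rightarrow>\<^sub>L 'a)) \<Rightarrow> bool" where
  "is_generator A D S \<longleftrightarrow>
     C0_semigroup S \<and>
     D = {v. \<exists>w. ((\<lambda>h. (1 / h) *\<^sub>R (blinfun_apply (S h) v - v)) \<longlongrightarrow> w) (at_right 0)} \<and>
     (\<forall>v\<in>D. ((\<lambda>h. (1 / h) *\<^sub>R (blinfun_apply (S h) v - v)) \<longlongrightarrow> A v) (at_right 0))"

definition qplus :: "real \<Rightarrow> real \<Rightarrow> real" where
  "qplus \<theta> T = (if \<theta> = 0 then T else (exp (\<theta> * T) - 1) / \<theta>)"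

definition qminus :: "real \<Rightarrow> real \<Rightarrow> real" where
  "qminus \<theta> T = (if \<theta> = 0 then T else (1 - exp (- \<theta> * T)) / \<theta>)"

primrec mpow :: "real^'n^'n \<Rightarrow> nat \<Rightarrow> real^'n^'n" where
  "mpow M 0 = mat 1"
| "mpow M (Suc n) = M ** mpow M n"

definition convergent_to_zero :: "real^'n^'n \<Rightarrow> bool" where
  "convergent_to_zero M \<longleftrightarrow> (\<lambda>n. mpow M n) \<longlonglongrightarrow> 0"

definition Mtheta :: "real \<Rightarrow> real \<Rightarrow> real \<Rightarrow> real \<Rightarrow> real \<Rightarrow> real \<Rightarrow> real \<Rightarrow> real \<Rightarrow> real \<Rightarrow> real^2^2" where
  "Mtheta CA T a k a11 a12 a21 a22 \<theta> =
     CA *\<^sub>R (vector [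
        vector [1 / a + (1 + 1 / a) * T * a11 + (k / a) * T * a21,
                ((1 + 1 / a) * a12 + (k / a) * a22) * qplus \<theta> T],
        vector [T * a21, a22 * qminus \<theta> T]] :: real^2^2)"

end

theory Submission
  imports Defs
begin

text \<open>Solving the boundary condition for \<open>x 0\<close>, with \<open>x T\<close> and \<open>y T\<close> given by the
  variation-of-constants formulas, turns mild solutions into the fixed points of an operator \<open>N\<close>
  on pairs of continuous functions on \<open>[0, T]\<close>. Measure differences of first components in the
  sup norm and differences of second components in the Bielecki norm \<open>sup\<^sub>t exp (-\<theta> t) |_|\<close>.
  The Lipschitz bounds then estimate the vector of these two distances for \<open>N p\<close>, \<open>N q\<close> by
  \<open>M(\<theta>)\<close> times the vector for \<open>p\<close>, \<open>q\<close>. As the powers of \<open>M(\<theta>)\<close> tend to zero, some iterate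
  of \<open>N\<close> is a contraction (Perov's fixed point theorem), so \<open>N\<close> has exactly one fixed point.\<close>

lemma has_integral_exp_qplus:
  fixes \<theta> t :: real
  assumes "0 \<le> t"
  shows "((\<lambda>s. exp (\<theta> * s)) has_integral qplus \<theta> t) {0..t}"
proof (cases "\<theta> = 0")
  case True
  then show ?thesis
    using has_integral_const_real[of "1::real" 0 t] assms by (simp add: qplus_def)
next
  case False
  have "((\<lambda>s. exp (\<theta> * s)) has_integral exp (\<theta> * t) / \<theta> - exp (\<theta> * 0) / \<theta>) {0..t}"
  proof (rule fundamental_theorem_of_calculus[OF assms])
    fix s :: real
    have "((\<lambda>s. exp (\<theta> * s) / \<theta>) has_real_derivative exp (\<theta> * s)) (at s)"
      using False by (auto intro!: derivative_eq_intros)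
    then show "((\<lambda>s. exp (\<theta> * s) / \<theta>) has_vector_derivative exp (\<theta> * s)) (at s within {0..t})"
      by (simp add: has_real_derivative_iff_has_vector_derivative has_vector_derivative_at_within)
  qed
  then show ?thesis
    using False by (simp add: qplus_def diff_divide_distrib)
qed

lemma qplus_mono: "0 \<le> \<theta> \<Longrightarrow> t \<le> t' \<Longrightarrow> qplus \<theta> t \<le> qplus \<theta> t'"
  by (auto simp: qplus_def intro!: divide_right_mono)

lemma qminus_mono: "0 \<le> \<theta> \<Longrightarrow> t \<le> t' \<Longrightarrow> qminus \<theta> t \<le> qminus \<theta> t'"
  by (auto simp: qminus_def intro!: divide_right_mono)

lemma exp_times_qplus: "exp (- \<theta> * t) * qplus \<theta> t = qminus \<theta> t"
proof -
  have "exp (- \<theta> * t) * (exp (\<theta> * t) - 1) = 1 - exp (- \<theta> * t)"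
    by (simp add: right_diff_distrib exp_add[symmetric])
  then show ?thesis
    by (auto simp: qplus_def qminus_def)
qed

lemma Mtheta_nth:
  "Mtheta CA T a k a11 a12 a21 a22 \<theta> $ 1 $ 1 = CA * (1 / a + (1 + 1 / a) * T * a11 + (k / a) * T * a21)"
  "Mtheta CA T a k a11 a12 a21 a22 \<theta> $ 1 $ 2 = CA * (((1 + 1 / a) * a12 + (k / a) * a22) * qplus \<theta> T)"
  "Mtheta CA T a k a11 a12 a21 a22 \<theta> $ 2 $ 1 = CA * (T * a21)"
  "Mtheta CA T a k a11 a12 a21 a22 \<theta> $ 2 $ 2 = CA * (a22 * qminus \<theta> T)"
  by (simp_all add: Mtheta_def)

lemma matrix_vector_mult_nth_2:
  fixes A :: "real^2^2"
  shows "(A *v D) $ i = A $ i $ 1 * D $ 1 + A $ i $ 2 * D $ 2"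
  by (simp add: matrix_vector_mult_def UNIV_2)

lemma continuous_on_Lipschitz_comp2:
  fixes H :: "'a::real_normed_vector \<Rightarrow> 'b::real_normed_vector \<Rightarrow> 'c::real_normed_vector"
  assumes H: "\<forall>x xb y yb. norm (H x y - H xb yb) \<le> c1 * norm (x - xb) + c2 * norm (y - yb)"
    and u: "continuous_on K u" and v: "continuous_on K v"
  shows "continuous_on K (\<lambda>s. H (u s) (v s))"
  unfolding continuous_on_def
proof
  fix s assume s: "s \<in> K"
  have "((\<lambda>s'. u s' - u s) \<longlongrightarrow> 0) (at s within K)" "((\<lambda>s'. v s' - v s) \<longlongrightarrow> 0) (at s within K)"
    using u v s unfolding continuous_on_def by (auto intro: LIM_zero)
  then have "((\<lambda>s'. c1 * norm (u s' - u s) + c2 * norm (v s' - v s)) \<longlongrightarrow> 0) (at s within K)"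
    using tendsto_add[OF tendsto_mult_right_zero[OF tendsto_norm_zero]
        tendsto_mult_right_zero[OF tendsto_norm_zero]] by simp
  moreover have "\<forall>\<^sub>F s' in at s within K.
      norm (H (u s') (v s') - H (u s) (v s)) \<le> c1 * norm (u s' - u s) + c2 * norm (v s' - v s)"
    using H by simp
  ultimately have "((\<lambda>s'. H (u s') (v s') - H (u s) (v s)) \<longlongrightarrow> 0) (at s within K)"
    by (rule Lim_null_comparison[rotated])
  then show "((\<lambda>s'. H (u s') (v s')) \<longlongrightarrow> H (u s) (v s)) (at s within K)"
    by (rule LIM_zero_cancel)
qed

lemma ext_cont_in_bcontfun:
  fixes f :: "'a::euclidean_space \<Rightarrow> 'b::metric_space"
  assumes "continuous_on (cbox a b) f"
  shows "ext_cont f a b \<in> bcontfun"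
proof -
  have "bounded (range (ext_cont f a b))"
    unfolding ext_cont_def
    by (intro clamp_bounded compact_imp_bounded compact_continuous_image assms compact_cbox)
  then show ?thesis
    using continuous_on_ext_cont[OF assms] by (simp add: bcontfun_def)
qed

section \<open>Perov's fixed point theorem\<close>

lemma iterate_contraction_imp_unique_fixpoint:
  fixes f :: "'a::complete_space \<Rightarrow> 'a"
  assumes "0 \<le> c" "c < 1" and "\<forall>x y. dist ((f ^^ m) x) ((f ^^ m) y) \<le> c * dist x y"
  shows "\<exists>!x. f x = x"
proof -
  obtain x where x: "(f ^^ m) x = x" and unique: "\<And>y. (f ^^ m) y = y \<Longrightarrow> y = x"
    using banach_fix_type[OF assms] by blast
  have "(f ^^ m) (f x) = f x"
    by (metis x funpow_swap1)
  then have "f x = x"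
    by (rule unique)
  moreover have "y = x" if "f y = y" for y
  proof -
    have "(f ^^ n) y = y" for n
      by (induction n) (simp_all add: that)
    then show ?thesis
      by (rule unique)
  qed
  ultimately show ?thesis
    by blast
qed

lemma mpow_entries_abs_sum_tendsto_zero:
  fixes M :: "real^'n^'n"
  assumes "convergent_to_zero M"
  shows "(\<lambda>n. \<Sum>i\<in>UNIV. \<Sum>j\<in>UNIV. \<bar>mpow M n $ i $ j\<bar>) \<longlonglongrightarrow> 0"
proof -
  have "(\<lambda>n. mpow M n $ i $ j) \<longlonglongrightarrow> 0" for i j
    using assms unfolding convergent_to_zero_def
    by (metis tendsto_vec_nth zero_index)
  then show ?thesis
    by (auto intro!: tendsto_null_sum tendsto_rabs_zero)
qed

lemma norm_matrix_vector_mult_le: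
  fixes A :: "real^'n^'m"
  shows "norm (A *v x) \<le> (\<Sum>i\<in>UNIV. \<Sum>j\<in>UNIV. \<bar>A $ i $ j\<bar>) * norm x"
  using onorm[OF matrix_vector_mul_bounded_linear, of A x]
    mult_right_mono[OF onorm_le_matrix_component_sum norm_ge_zero, of A x]
  by linarith

lemma convergent_to_zero_imp_small_power:
  fixes M :: "real^'n^'n"
  assumes "convergent_to_zero M" and "0 < \<epsilon>"
  shows "\<exists>n>0. \<forall>x. norm (mpow M n *v x) \<le> \<epsilon> * norm x"
proof -
  define s where "s n = (\<Sum>i\<in>UNIV. \<Sum>j\<in>UNIV. \<bar>mpow M n $ i $ j\<bar>)" for n
  have "(\<lambda>n. s (Suc n)) \<longlonglongrightarrow> 0"
    using LIMSEQ_Suc[OF mpow_entries_abs_sum_tendsto_zero[OF assms(1)]] unfolding s_def .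
  from order_tendstoD(2)[OF this assms(2)] obtain n where "s (Suc n) < \<epsilon>"
    by (auto simp: eventually_sequentially)
  then have "norm (mpow M (Suc n) *v x) \<le> \<epsilon> * norm x" for x
    using norm_matrix_vector_mult_le[of "mpow M (Suc n)" x] mult_right_mono[of "s (Suc n)" \<epsilon> "norm x"]
    unfolding s_def by simp
  then show ?thesis
    by blast
qed

lemma funpow_bound:
  fixes \<Phi> :: "'a \<Rightarrow> 'a" and M :: "real^'n^'n"
  assumes step: "\<And>p q D. bound p q D \<Longrightarrow> bound (\<Phi> p) (\<Phi> q) (M *v D)" and "bound p q D"
  shows "bound ((\<Phi> ^^ n) p) ((\<Phi> ^^ n) q) (mpow M n *v D)"
proof (induction n)
  case 0
  then show ?case
    using assms(2) by simp
next
  case (Suc n)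
  then show ?case
    using step[OF Suc] by (simp add: matrix_vector_mul_assoc)
qed

text \<open>The vector-valued metric of Perov's theorem is replaced by a relation: \<open>bound p q D\<close> says
  that \<open>D\<close> bounds the vector distance of \<open>p\<close> and \<open>q\<close>. It only has to control the metric on the
  range of \<open>\<Phi>\<close>.\<close>

lemma vector_contraction_imp_unique_fixpoint:
  fixes \<Phi> :: "'a::complete_space \<Rightarrow> 'a" and M :: "real^'n^'n"
    and bound :: "'a \<Rightarrow> 'a \<Rightarrow> real^'n \<Rightarrow> bool"
  assumes M: "convergent_to_zero M" and C: "0 \<le> A" "0 \<le> B"
    and step: "\<And>p q D. bound p q D \<Longrightarrow> bound (\<Phi> p) (\<Phi> q) (M *v D)"
    and init: "\<And>p q. \<exists>D. bound p q D \<and> norm D \<le> A * dist p q"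
    and range: "\<And>p q D. bound (\<Phi> p) (\<Phi> q) D \<Longrightarrow> dist (\<Phi> p) (\<Phi> q) \<le> B * norm D"
  shows "\<exists>!p. \<Phi> p = p"
proof -
  define \<epsilon> where "\<epsilon> = 1 / (2 * (A * B + 1))"
  have "0 < \<epsilon>"
    using C unfolding \<epsilon>_def by (simp add: add_nonneg_pos)
  obtain n where "0 < n" and n: "\<And>x. norm (mpow M n *v x) \<le> \<epsilon> * norm x"
    using convergent_to_zero_imp_small_power[OF M \<open>0 < \<epsilon>\<close>] by auto
  then obtain m where m: "n = Suc m"
    using gr0_implies_Suc by blast
  have "dist ((\<Phi> ^^ n) p) ((\<Phi> ^^ n) q) \<le> 1/2 * dist p q" for p q
  proof -
    obtain D where D: "bound p q D" "norm D \<le> A * dist p q"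
      using init by blast
    have "dist ((\<Phi> ^^ n) p) ((\<Phi> ^^ n) q) \<le> B * norm (mpow M n *v D)"
      using range[of "(\<Phi> ^^ m) p" "(\<Phi> ^^ m) q"] m
        funpow_bound[where bound = bound and \<Phi> = \<Phi> and M = M, OF step D(1), of n]
      by simp
    also have "\<dots> \<le> B * (\<epsilon> * (A * dist p q))"
    proof (rule mult_left_mono[OF _ C(2)])
      have "\<epsilon> * norm D \<le> \<epsilon> * (A * dist p q)"
        using D(2) \<open>0 < \<epsilon>\<close> by (intro mult_left_mono) auto
      then show "norm (mpow M n *v D) \<le> \<epsilon> * (A * dist p q)"
        using n[of D] by linarith
    qed
    also have "\<dots> = (A * B) / (2 * (A * B + 1)) * dist p q"
      unfolding \<epsilon>_def by (simp add: field_simps)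
    also have "\<dots> \<le> 1/2 * dist p q"
    proof (rule mult_right_mono)
      have "0 \<le> A * B"
        using C by simp
      then show "A * B / (2 * (A * B + 1)) \<le> 1/2"
        by (simp add: divide_le_eq)
    qed simp
    finally show ?thesis .
  qed
  then show ?thesis
    by (intro iterate_contraction_imp_unique_fixpoint[where c = "1/2" and m = n]) auto
qed

section \<open>Bounded \<open>C\<^sub>0\<close>-semigroups and the Duhamel integral\<close>

locale bounded_C0_semigroup =
  fixes S :: "real \<Rightarrow> ('a::banach \<Rightarrow>\<^sub>L 'a)" and L C :: real
  assumes C0: "C0_semigroup S" and bounded: "\<forall>t\<in>{0..L}. norm (S t) \<le> C"
begin

lemma norm_apply_le: "t \<in> {0..L} \<Longrightarrow> norm (S t v) \<le> C * norm v"
  by (meson bounded mult_right_mono norm_blinfun norm_ge_zero order_trans)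

lemma bound_nonneg: "0 \<le> L \<Longrightarrow> 0 \<le> C"
  using bounded order_trans[OF norm_ge_zero, of "S 0" C] by simp

lemma apply_add: "0 \<le> t \<Longrightarrow> 0 \<le> s \<Longrightarrow> S (t + s) v = S t (S s v)"
  using C0 unfolding C0_semigroup_def by auto

lemma apply_zero [simp]: "S 0 v = v"
  using C0 unfolding C0_semigroup_def by auto

lemma orbit_dist_le:
  assumes "r \<in> {0..L}" "r' \<in> {0..L}"
  shows "norm (S r v - S r' v) \<le> C * norm (S \<bar>r - r'\<bar> v - v)"
proof -
  have le: "norm (S r v - S r' v) \<le> C * norm (S (r' - r) v - v)"
    if "r \<in> {0..L}" "r \<le> r'" for r r'
  proof -
    have "S r v - S r' v = S r (v - S (r' - r) v)"
      using apply_add[of r "r' - r" v] that by (simp add: blinfun.diff_right)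
    then show ?thesis
      using norm_apply_le[OF that(1)] by (simp add: norm_minus_commute)
  qed
  show ?thesis
  proof (cases "r \<le> r'")
    case True
    then show ?thesis using le[OF assms(1)] by simp
  next
    case False
    then show ?thesis using le[OF assms(2), of r] by (simp add: norm_minus_commute)
  qed
qed

lemma continuous_on_orbit: "continuous_on {0..L} (\<lambda>t. S t v)"
  unfolding continuous_on_def
proof
  fix r assume r: "r \<in> {0..L}"
  have "((\<lambda>t. \<bar>t - r\<bar>) \<longlongrightarrow> 0) (at r within {0..L})"
    by (intro tendsto_rabs_zero LIM_zero tendsto_ident_at)
  moreover have "\<forall>\<^sub>F t in at r within {0..L}. \<bar>t - r\<bar> \<in> {0<..} \<and> \<bar>t - r\<bar> \<noteq> 0"
    unfolding eventually_at_filter by (rule always_eventually) auto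
  ultimately have "filterlim (\<lambda>t. \<bar>t - r\<bar>) (at_right 0) (at r within {0..L})"
    unfolding filterlim_at by blast
  moreover have "((\<lambda>h. S h v) \<longlongrightarrow> v) (at_right 0)"
    using C0 unfolding C0_semigroup_def by blast
  ultimately have "((\<lambda>t. S \<bar>t - r\<bar> v) \<longlongrightarrow> v) (at r within {0..L})"
    by (rule filterlim_compose[rotated])
  then have "((\<lambda>t. C * norm (S \<bar>t - r\<bar> v - v)) \<longlongrightarrow> 0) (at r within {0..L})"
    by (intro tendsto_mult_right_zero tendsto_norm_zero LIM_zero)
  moreover have "\<forall>\<^sub>F t in at r within {0..L}. norm (S t v - S r v) \<le> C * norm (S \<bar>t - r\<bar> v - v)"
    unfolding eventually_at_filter using r by (intro always_eventually) (auto intro: orbit_dist_le)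
  ultimately have "((\<lambda>t. S t v - S r v) \<longlongrightarrow> 0) (at r within {0..L})"
    by (rule Lim_null_comparison[rotated])
  then show "((\<lambda>t. S t v) \<longlongrightarrow> S r v) (at r within {0..L})"
    by (rule LIM_zero_cancel)
qed

lemma continuous_on_apply:
  assumes \<tau>: "continuous_on K \<tau>" "\<tau> ` K \<subseteq> {0..L}" and h: "continuous_on K h"
  shows "continuous_on K (\<lambda>z. S (\<tau> z) (h z))"
  unfolding continuous_on_def
proof
  fix z assume z: "z \<in> K"
  have "continuous_on K (\<lambda>z'. S (\<tau> z') (h z))"
    by (rule continuous_on_compose2[OF continuous_on_orbit \<tau>])
  then have orbit: "((\<lambda>z'. S (\<tau> z') (h z)) \<longlongrightarrow> S (\<tau> z) (h z)) (at z within K)"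
    using z unfolding continuous_on_def by blast
  have "((\<lambda>z'. C * norm (h z' - h z)) \<longlongrightarrow> 0) (at z within K)"
    using h z unfolding continuous_on_def
    by (intro tendsto_mult_right_zero tendsto_norm_zero LIM_zero) blast
  moreover have "\<forall>\<^sub>F z' in at z within K. norm (S (\<tau> z') (h z' - h z)) \<le> C * norm (h z' - h z)"
    using \<tau>(2) by (auto simp: eventually_at_filter intro!: always_eventually norm_apply_le)
  ultimately have "((\<lambda>z'. S (\<tau> z') (h z' - h z)) \<longlongrightarrow> 0) (at z within K)"
    by (rule Lim_null_comparison[rotated])
  from tendsto_add[OF this orbit]
  show "((\<lambda>z'. S (\<tau> z') (h z')) \<longlongrightarrow> S (\<tau> z) (h z)) (at z within K)"
    by (simp add: blinfun.diff_right)
qed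

definition duhamel :: "(real \<Rightarrow> 'a) \<Rightarrow> real \<Rightarrow> 'a" where
  "duhamel w t = integral {0..t} (\<lambda>s. S (t - s) (w s))"

lemma integrable_duhamel_integrand:
  "continuous_on {0..t} w \<Longrightarrow> t \<le> L \<Longrightarrow> (\<lambda>s. S (t - s) (w s)) integrable_on {0..t}"
  by (intro integrable_continuous_interval continuous_on_apply continuous_intros) auto

lemma duhamel_zero [simp]: "duhamel w 0 = 0"
  by (simp add: duhamel_def)

lemma duhamel_cong: "(\<And>s. s \<in> {0..t} \<Longrightarrow> w s = w' s) \<Longrightarrow> duhamel w t = duhamel w' t"
  unfolding duhamel_def by (rule integral_cong) auto

lemma duhamel_diff:
  assumes "continuous_on {0..t} w" "continuous_on {0..t} w'" "t \<le> L"
  shows "duhamel w t - duhamel w' t = duhamel (\<lambda>s. w s - w' s) t"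
  unfolding duhamel_def
  by (simp add: integral_diff[symmetric] integrable_duhamel_integrand assms blinfun.diff_right)

lemma norm_apply_duhamel_le:
  assumes w: "continuous_on {0..t} w" and t: "0 \<le> t0" "t0 + t \<le> L"
    and g: "g integrable_on {0..t}" "\<And>s. s \<in> {0..t} \<Longrightarrow> norm (w s) \<le> g s"
  shows "norm (S t0 (duhamel w t)) \<le> C * integral {0..t} g"
proof -
  have "S t0 (duhamel w t) = integral {0..t} (\<lambda>s. S t0 (S (t - s) (w s)))"
    unfolding duhamel_def using w t
    by (intro integral_blinfun_apply[symmetric] integrable_duhamel_integrand) auto
  also have "\<dots> = integral {0..t} (\<lambda>s. S (t0 + (t - s)) (w s))"
    using t by (intro integral_cong) (auto simp: apply_add)
  also have "norm \<dots> \<le> integral {0..t} (\<lambda>s. C * g s)"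
  proof (rule integral_norm_bound_integral)
    show "(\<lambda>s. S (t0 + (t - s)) (w s)) integrable_on {0..t}"
      using w t by (intro integrable_continuous_interval continuous_on_apply continuous_intros) auto
    show "(\<lambda>s. C * g s) integrable_on {0..t}"
      using g(1) by (rule integrable_on_mult_right)
    show "norm (S (t0 + (t - s)) (w s)) \<le> C * g s" if "s \<in> {0..t}" for s
    proof -
      have "norm (S (t0 + (t - s)) (w s)) \<le> C * norm (w s)"
        using that t by (intro norm_apply_le) auto
      also have "\<dots> \<le> C * g s"
        using g(2)[OF that] bound_nonneg that t by (intro mult_left_mono) auto
      finally show ?thesis .
    qed
  qed
  finally show ?thesis
    by (simp only: integral_mult_right)
qed

lemma duhamel_rescaled:
  assumes w: "continuous_on {0..t} w" and t: "0 \<le> t" "t \<le> L"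
  shows "duhamel w t = t *\<^sub>R integral {0..1} (\<lambda>u. S (t - t * u) (w (t * u)))"
proof (cases "t = 0")
  case True
  then show ?thesis
    by (simp add: duhamel_def)
next
  case False
  with t have "0 < t"
    by simp
  have "((\<lambda>s. S (t - s) (w s)) has_integral duhamel w t) (cbox 0 t)"
    unfolding duhamel_def using integrable_duhamel_integrand[OF w t(2)]
    by (simp add: integrable_integral)
  from has_integral_affinity'[OF this \<open>0 < t\<close>, of 0]
  have "((\<lambda>u. S (t - t * u) (w (t * u))) has_integral duhamel w t /\<^sub>R t) {0..1}"
    using \<open>0 < t\<close> by simp
  then show ?thesis
    using \<open>0 < t\<close> by (simp add: integral_unique)
qed

lemma continuous_on_duhamel:
  assumes w: "continuous_on {0..t1} w" and t1: "t1 \<le> L"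
  shows "continuous_on {0..t1} (duhamel w)"
proof -
  have range: "t * u \<in> {0..t1}" "t - t * u \<in> {0..t1}" if "t \<in> {0..t1}" "u \<in> {0..1}" for t u
  proof -
    have "0 \<le> t * u" "t * u \<le> t"
      using that by (auto intro: mult_left_le)
    then show "t * u \<in> {0..t1}" "t - t * u \<in> {0..t1}"
      using that by auto
  qed
  \<comment> \<open>The substitution \<open>s = t u\<close> moves the parameter \<open>t\<close> from the domain into the integrand.\<close>
  have "(\<lambda>z. fst z * snd z) ` ({0..t1} \<times> cbox 0 1) \<subseteq> {0..t1}"
    "(\<lambda>z. fst z - fst z * snd z) ` ({0..t1} \<times> cbox 0 1) \<subseteq> {0..L}"
    using range t1 by fastforce+
  then have "continuous_on ({0..t1} \<times> cbox 0 1) (\<lambda>z. S (fst z - fst z * snd z) (w (fst z * snd z)))"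
    by (intro continuous_on_apply continuous_on_compose2[OF w] continuous_intros)
  then have "continuous_on {0..t1} (\<lambda>t. integral (cbox 0 1) (\<lambda>u. S (t - t * u) (w (t * u))))"
    by (intro integral_continuous_on_param) (simp add: case_prod_beta)
  then have "continuous_on {0..t1} (\<lambda>t. t *\<^sub>R integral {0..1} (\<lambda>u. S (t - t * u) (w (t * u))))"
    by (intro continuous_intros) simp
  moreover have "t *\<^sub>R integral {0..1} (\<lambda>u. S (t - t * u) (w (t * u))) = duhamel w t"
    if "t \<in> {0..t1}" for t
    using that t1 by (intro duhamel_rescaled[symmetric] continuous_on_subset[OF w]) auto
  ultimately show ?thesis
    by (rule continuous_on_eq)
qed

end

section \<open>The coupled system with nonlocal boundary condition\<close>

locale coupled_bvp = bounded_C0_semigroup S "2 * T" CA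
  for S :: "real \<Rightarrow> ('a::banach \<Rightarrow>\<^sub>L 'a)" and T CA :: real +
  fixes F G :: "'a \<Rightarrow> 'a \<Rightarrow> 'a" and a b k a11 a12 a21 a22 \<theta> :: real and \<beta> :: 'a
  assumes T_pos: "0 < T" and a_pos: "0 < a" and k_nonneg: "0 \<le> k"
    and a_nonneg: "0 \<le> a11" "0 \<le> a12" "0 \<le> a21" "0 \<le> a22"
    and F_lip: "\<forall>x xb y yb. norm (F x y - F xb yb) \<le> a11 * norm (x - xb) + a12 * norm (y - yb)"
    and G_lip: "\<forall>x xb y yb. norm (G x y - G xb yb) \<le> a21 * norm (x - xb) + a22 * norm (y - yb)"
    and \<theta>_nonneg: "0 \<le> \<theta>"
begin

definition mild_solution :: "(real \<Rightarrow> 'a) \<Rightarrow> (real \<Rightarrow> 'a) \<Rightarrow> bool" where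
  "mild_solution x y \<longleftrightarrow>
     continuous_on {0..T} x \<and> continuous_on {0..T} y \<and> y 0 = \<beta> \<and>
     (\<forall>t\<in>{0..T}.
        x t = S t (x 0) + integral {0..t} (\<lambda>s. S (t - s) (F (x s) (y s))) \<and>
        y t = S t (y 0) + integral {0..t} (\<lambda>s. S (t - s) (G (x s) (y s)))) \<and>
     x T - a *\<^sub>R x 0 = k *\<^sub>R (y T - b *\<^sub>R y 0)"

definition initial_value :: "(real \<Rightarrow> 'a) \<Rightarrow> (real \<Rightarrow> 'a) \<Rightarrow> 'a" where
  "initial_value x y = (1 / a) *\<^sub>R
     (S T (x 0) + duhamel (\<lambda>s. F (x s) (y s)) T
      - k *\<^sub>R (S T \<beta> + duhamel (\<lambda>s. G (x s) (y s)) T - b *\<^sub>R \<beta>))"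

definition Nx :: "(real \<Rightarrow> 'a) \<Rightarrow> (real \<Rightarrow> 'a) \<Rightarrow> real \<Rightarrow> 'a" where
  "Nx x y t = S t (initial_value x y) + duhamel (\<lambda>s. F (x s) (y s)) t"

definition Ny :: "(real \<Rightarrow> 'a) \<Rightarrow> (real \<Rightarrow> 'a) \<Rightarrow> real \<Rightarrow> 'a" where
  "Ny x y t = S t \<beta> + duhamel (\<lambda>s. G (x s) (y s)) t"

lemma initial_value_iff_boundary_condition:
  assumes "x T = S T (x 0) + duhamel (\<lambda>s. F (x s) (y s)) T"
    and "y T = S T \<beta> + duhamel (\<lambda>s. G (x s) (y s)) T"
  shows "x 0 = initial_value x y \<longleftrightarrow> x T - a *\<^sub>R x 0 = k *\<^sub>R (y T - b *\<^sub>R \<beta>)"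
proof -
  have "x 0 = initial_value x y \<longleftrightarrow> a *\<^sub>R x 0 = x T - k *\<^sub>R (y T - b *\<^sub>R \<beta>)"
    unfolding initial_value_def assms using a_pos by (simp add: eq_vector_fraction_iff)
  also have "\<dots> \<longleftrightarrow> x T - a *\<^sub>R x 0 = k *\<^sub>R (y T - b *\<^sub>R \<beta>)"
    by (auto simp: eq_diff_eq diff_eq_eq add.commute)
  finally show ?thesis .
qed

lemma mild_solution_iff_fixpoint:
  "mild_solution x y \<longleftrightarrow> continuous_on {0..T} x \<and> continuous_on {0..T} y \<and>
     (\<forall>t\<in>{0..T}. x t = Nx x y t \<and> y t = Ny x y t)"
proof -
  have T: "T \<in> {0..T}" "0 \<in> {0..T}"
    using T_pos by auto
  have mild_solution_duhamel: "mild_solution x y \<longleftrightarrow>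
     continuous_on {0..T} x \<and> continuous_on {0..T} y \<and> y 0 = \<beta> \<and>
     (\<forall>t\<in>{0..T}. x t = S t (x 0) + duhamel (\<lambda>s. F (x s) (y s)) t \<and>
                  y t = S t \<beta> + duhamel (\<lambda>s. G (x s) (y s)) t) \<and>
     x T - a *\<^sub>R x 0 = k *\<^sub>R (y T - b *\<^sub>R \<beta>)"
    unfolding mild_solution_def duhamel_def by auto
  show ?thesis
  proof
    assume "mild_solution x y"
    then have "x 0 = initial_value x y"
      unfolding mild_solution_duhamel using initial_value_iff_boundary_condition T(1) by blast
    with \<open>mild_solution x y\<close> show "continuous_on {0..T} x \<and> continuous_on {0..T} y \<and>
        (\<forall>t\<in>{0..T}. x t = Nx x y t \<and> y t = Ny x y t)"
      unfolding mild_solution_duhamel Nx_def Ny_def by simp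
  next
    assume eqs: "continuous_on {0..T} x \<and> continuous_on {0..T} y \<and>
        (\<forall>t\<in>{0..T}. x t = Nx x y t \<and> y t = Ny x y t)"
    then have y0: "y 0 = \<beta>" and x0: "x 0 = initial_value x y"
      using T(2) unfolding Nx_def Ny_def by auto
    have "x T = S T (x 0) + duhamel (\<lambda>s. F (x s) (y s)) T"
      "y T = S T \<beta> + duhamel (\<lambda>s. G (x s) (y s)) T"
      using eqs T(1) x0 unfolding Nx_def Ny_def by auto
    then have "x T - a *\<^sub>R x 0 = k *\<^sub>R (y T - b *\<^sub>R \<beta>)"
      using initial_value_iff_boundary_condition x0 by blast
    with eqs y0 x0 show "mild_solution x y"
      unfolding mild_solution_duhamel Nx_def Ny_def by auto
  qed
qed

lemma Nx_Ny_cong: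
  assumes "\<And>s. s \<in> {0..T} \<Longrightarrow> x s = x' s \<and> y s = y' s" and "t \<in> {0..T}"
  shows "Nx x y t = Nx x' y' t" "Ny x y t = Ny x' y' t"
proof -
  have "duhamel (\<lambda>s. H (x s) (y s)) t' = duhamel (\<lambda>s. H (x' s) (y' s)) t'" if "t' \<in> {0..T}" for H t'
    using assms(1) that by (intro duhamel_cong) auto
  moreover have "x 0 = x' 0"
    using assms(1) T_pos by auto
  ultimately show "Nx x y t = Nx x' y' t" "Ny x y t = Ny x' y' t"
    unfolding Nx_def Ny_def initial_value_def using assms(2) T_pos by auto
qed

lemma continuous_on_Nx_Ny:
  assumes "continuous_on {0..T} x" "continuous_on {0..T} y"
  shows "continuous_on {0..T} (Nx x y)" "continuous_on {0..T} (Ny x y)"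
proof -
  have "continuous_on {0..T} (\<lambda>t. S t v)" for v
    using T_pos by (intro continuous_on_apply continuous_intros) auto
  moreover have "continuous_on {0..T} (duhamel (\<lambda>s. F (x s) (y s)))"
    "continuous_on {0..T} (duhamel (\<lambda>s. G (x s) (y s)))"
    using T_pos assms
    by (auto intro!: continuous_on_duhamel continuous_on_Lipschitz_comp2[OF F_lip]
        continuous_on_Lipschitz_comp2[OF G_lip])
  ultimately show "continuous_on {0..T} (Nx x y)" "continuous_on {0..T} (Ny x y)"
    unfolding Nx_def[abs_def] Ny_def[abs_def] by (auto intro: continuous_on_add)
qed

abbreviation M :: "real^2^2" where
  "M \<equiv> Mtheta CA T a k a11 a12 a21 a22 \<theta>"

definition pair_dist_le ::
    "(real \<Rightarrow> 'a) \<Rightarrow> (real \<Rightarrow> 'a) \<Rightarrow> (real \<Rightarrow> 'a) \<Rightarrow> (real \<Rightarrow> 'a) \<Rightarrow> real^2 \<Rightarrow> bool"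
  where "pair_dist_le x y x' y' D \<longleftrightarrow>
    (\<forall>t\<in>{0..T}. norm (x t - x' t) \<le> D $ 1 \<and> exp (- \<theta> * t) * norm (y t - y' t) \<le> D $ 2)"

lemma pair_dist_le_nonneg:
  assumes "pair_dist_le x y x' y' D"
  shows "0 \<le> D $ 1" "0 \<le> D $ 2"
proof -
  have "norm (x 0 - x' 0) \<le> D $ 1 \<and> exp (- \<theta> * 0) * norm (y 0 - y' 0) \<le> D $ 2"
    using assms T_pos unfolding pair_dist_le_def by (intro bspec[of _ _ 0]) auto
  then show "0 \<le> D $ 1" "0 \<le> D $ 2"
    by (auto intro: order_trans[OF norm_ge_zero])
qed

lemma Lipschitz_comp_diff_le:
  assumes H: "\<forall>x xb y yb. norm (H x y - H xb yb) \<le> c1 * norm (x - xb) + c2 * norm (y - yb)"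
    "0 \<le> c1" "0 \<le> c2"
    and D: "pair_dist_le x y x' y' D" and s: "s \<in> {0..T}"
  shows "norm (H (x s) (y s) - H (x' s) (y' s)) \<le> c1 * D $ 1 + c2 * D $ 2 * exp (\<theta> * s)"
proof -
  have "norm (y s - y' s) = exp (\<theta> * s) * (exp (- \<theta> * s) * norm (y s - y' s))"
    by (simp add: mult.assoc[symmetric] exp_add[symmetric])
  also have "\<dots> \<le> exp (\<theta> * s) * D $ 2"
    using D s unfolding pair_dist_le_def by (intro mult_left_mono) auto
  finally have y: "norm (y s - y' s) \<le> exp (\<theta> * s) * D $ 2" .
  have "norm (H (x s) (y s) - H (x' s) (y' s)) \<le> c1 * norm (x s - x' s) + c2 * norm (y s - y' s)"
    using H(1) by blast
  also have "\<dots> \<le> c1 * D $ 1 + c2 * (exp (\<theta> * s) * D $ 2)"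
    using D s y H(2,3) unfolding pair_dist_le_def by (intro add_mono mult_left_mono) auto
  finally show ?thesis
    by (simp add: algebra_simps)
qed

lemma duhamel_Lipschitz_comp_diff_le:
  assumes H: "\<forall>x xb y yb. norm (H x y - H xb yb) \<le> c1 * norm (x - xb) + c2 * norm (y - yb)"
    "0 \<le> c1" "0 \<le> c2"
    and cont: "continuous_on {0..T} x" "continuous_on {0..T} y"
      "continuous_on {0..T} x'" "continuous_on {0..T} y'"
    and D: "pair_dist_le x y x' y' D" and t: "t0 \<in> {0..T}" "t \<in> {0..T}"
  shows "norm (S t0 (duhamel (\<lambda>s. H (x s) (y s)) t - duhamel (\<lambda>s. H (x' s) (y' s)) t))
    \<le> CA * (c1 * D $ 1 * t + c2 * D $ 2 * qplus \<theta> t)"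
proof -
  have sub: "{0..t} \<subseteq> {0..T}"
    using t by auto
  have w: "continuous_on {0..t} (\<lambda>s. H (x s) (y s))" "continuous_on {0..t} (\<lambda>s. H (x' s) (y' s))"
    using continuous_on_subset[OF cont(1) sub] continuous_on_subset[OF cont(2) sub]
      continuous_on_subset[OF cont(3) sub] continuous_on_subset[OF cont(4) sub]
    by (auto intro: continuous_on_Lipschitz_comp2[OF H(1)])
  have "((\<lambda>s. exp (\<theta> * s)) has_integral qplus \<theta> t) {0..t}"
    using t by (intro has_integral_exp_qplus) auto
  from has_integral_add[OF has_integral_const_real[of "c1 * D $ 1" 0 t]
      has_integral_mult_right[OF this, of "c2 * D $ 2"]]
  have g: "((\<lambda>s. c1 * D $ 1 + c2 * D $ 2 * exp (\<theta> * s)) has_integral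
      c1 * D $ 1 * t + c2 * D $ 2 * qplus \<theta> t) {0..t}"
    using t by (simp add: algebra_simps)
  have "norm (S t0 (duhamel (\<lambda>s. H (x s) (y s) - H (x' s) (y' s)) t))
      \<le> CA * integral {0..t} (\<lambda>s. c1 * D $ 1 + c2 * D $ 2 * exp (\<theta> * s))"
    using t g sub by (intro norm_apply_duhamel_le continuous_on_diff w Lipschitz_comp_diff_le[OF H D])
      (auto intro: has_integral_integrable)
  then show ?thesis
    using duhamel_diff[OF w] g t T_pos by (simp add: integral_unique)
qed

lemma duhamel_Lipschitz_comp_diff_le_uniform:
  assumes H: "\<forall>x xb y yb. norm (H x y - H xb yb) \<le> c1 * norm (x - xb) + c2 * norm (y - yb)"
    "0 \<le> c1" "0 \<le> c2"
    and cont: "continuous_on {0..T} x" "continuous_on {0..T} y"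
      "continuous_on {0..T} x'" "continuous_on {0..T} y'"
    and D: "pair_dist_le x y x' y' D" and t: "t0 \<in> {0..T}" "t \<in> {0..T}"
  shows "norm (S t0 (duhamel (\<lambda>s. H (x s) (y s)) t - duhamel (\<lambda>s. H (x' s) (y' s)) t))
    \<le> CA * (c1 * D $ 1 * T + c2 * D $ 2 * qplus \<theta> T)"
proof -
  have "CA * (c1 * D $ 1 * t + c2 * D $ 2 * qplus \<theta> t) \<le> CA * (c1 * D $ 1 * T + c2 * D $ 2 * qplus \<theta> T)"
    using H(2,3) t pair_dist_le_nonneg[OF D] bound_nonneg T_pos qplus_mono[OF \<theta>_nonneg, of t T]
    by (intro mult_left_mono add_mono) auto
  then show ?thesis
    using duhamel_Lipschitz_comp_diff_le[OF assms] by linarith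
qed

lemma initial_value_diff_le:
  assumes cont: "continuous_on {0..T} x" "continuous_on {0..T} y"
      "continuous_on {0..T} x'" "continuous_on {0..T} y'"
    and D: "pair_dist_le x y x' y' D" and t: "t \<in> {0..T}"
  shows "norm (S t (initial_value x y - initial_value x' y'))
    \<le> (1 / a) * (CA * D $ 1 + CA * (a11 * D $ 1 * T + a12 * D $ 2 * qplus \<theta> T)
        + k * (CA * (a21 * D $ 1 * T + a22 * D $ 2 * qplus \<theta> T)))"
proof -
  define dF where "dF = S t (duhamel (\<lambda>s. F (x s) (y s)) T - duhamel (\<lambda>s. F (x' s) (y' s)) T)"
  define dG where "dG = S t (duhamel (\<lambda>s. G (x s) (y s)) T - duhamel (\<lambda>s. G (x' s) (y' s)) T)"
  have T: "T \<in> {0..T}" "0 \<in> {0..T}"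
    using T_pos by auto
  \<comment> \<open>\<open>S t (S T v) = S (t + T) v\<close> with \<open>t + T \<le> 2 T\<close>: this is why the semigroup must be
    bounded on \<open>[0, 2 T]\<close>.\<close>
  have "norm (S (t + T) (x 0 - x' 0)) \<le> CA * D $ 1"
    using D T t bound_nonneg unfolding pair_dist_le_def
    by (intro order_trans[OF norm_apply_le mult_left_mono]) auto
  then have x0: "norm (S t (S T (x 0 - x' 0))) \<le> CA * D $ 1"
    using t T by (simp add: apply_add)
  have "S t (initial_value x y - initial_value x' y') = (1 / a) *\<^sub>R (S t (S T (x 0 - x' 0)) + dF - k *\<^sub>R dG)"
    unfolding initial_value_def dF_def dG_def
    by (simp add: blinfun.diff_right blinfun.add_right blinfun.scaleR_right algebra_simps)
  also have "norm \<dots> \<le> (1 / a) * (norm (S t (S T (x 0 - x' 0))) + norm dF + k * norm dG)"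
    using norm_triangle_ineq4[of "S t (S T (x 0 - x' 0)) + dF" "k *\<^sub>R dG"]
      norm_triangle_ineq[of "S t (S T (x 0 - x' 0))" dF] a_pos k_nonneg
    by (simp add: divide_right_mono)
  also have "\<dots> \<le> (1 / a) * (CA * D $ 1 + CA * (a11 * D $ 1 * T + a12 * D $ 2 * qplus \<theta> T)
        + k * (CA * (a21 * D $ 1 * T + a22 * D $ 2 * qplus \<theta> T)))"
    unfolding dF_def dG_def using a_pos k_nonneg a_nonneg x0 t T
    by (intro add_mono mult_left_mono duhamel_Lipschitz_comp_diff_le_uniform[OF F_lip _ _ cont D]
        duhamel_Lipschitz_comp_diff_le_uniform[OF G_lip _ _ cont D]) auto
  finally show ?thesis .
qed

lemma Nx_diff_le:
  assumes cont: "continuous_on {0..T} x" "continuous_on {0..T} y"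
      "continuous_on {0..T} x'" "continuous_on {0..T} y'"
    and D: "pair_dist_le x y x' y' D" and t: "t \<in> {0..T}"
  shows "norm (Nx x y t - Nx x' y' t) \<le> M $ 1 $ 1 * D $ 1 + M $ 1 $ 2 * D $ 2"
proof -
  have "Nx x y t - Nx x' y' t = S t (initial_value x y - initial_value x' y')
      + S 0 (duhamel (\<lambda>s. F (x s) (y s)) t - duhamel (\<lambda>s. F (x' s) (y' s)) t)"
    unfolding Nx_def by (simp add: blinfun.diff_right)
  also have "norm \<dots> \<le> (1 / a) * (CA * D $ 1 + CA * (a11 * D $ 1 * T + a12 * D $ 2 * qplus \<theta> T)
        + k * (CA * (a21 * D $ 1 * T + a22 * D $ 2 * qplus \<theta> T)))
      + CA * (a11 * D $ 1 * T + a12 * D $ 2 * qplus \<theta> T)"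
    using t T_pos a_nonneg
    by (intro order_trans[OF norm_triangle_ineq] add_mono initial_value_diff_le[OF cont D]
        duhamel_Lipschitz_comp_diff_le_uniform[OF F_lip _ _ cont D]) auto
  also have "\<dots> = M $ 1 $ 1 * D $ 1 + M $ 1 $ 2 * D $ 2"
    using a_pos by (simp add: Mtheta_nth field_simps)
  finally show ?thesis .
qed

lemma Ny_diff_le:
  assumes cont: "continuous_on {0..T} x" "continuous_on {0..T} y"
      "continuous_on {0..T} x'" "continuous_on {0..T} y'"
    and D: "pair_dist_le x y x' y' D" and t: "t \<in> {0..T}"
  shows "exp (- \<theta> * t) * norm (Ny x y t - Ny x' y' t) \<le> M $ 2 $ 1 * D $ 1 + M $ 2 $ 2 * D $ 2"
proof -
  have D_nonneg: "0 \<le> D $ 1" "0 \<le> D $ 2"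
    using pair_dist_le_nonneg[OF D] by auto
  have "Ny x y t - Ny x' y' t = S 0 (duhamel (\<lambda>s. G (x s) (y s)) t - duhamel (\<lambda>s. G (x' s) (y' s)) t)"
    unfolding Ny_def by simp
  then have "norm (Ny x y t - Ny x' y' t) \<le> CA * (a21 * D $ 1 * t + a22 * D $ 2 * qplus \<theta> t)"
    using duhamel_Lipschitz_comp_diff_le[OF G_lip _ _ cont D, of 0 t] a_nonneg t T_pos by simp
  then have "exp (- \<theta> * t) * norm (Ny x y t - Ny x' y' t)
      \<le> CA * a21 * D $ 1 * (exp (- \<theta> * t) * t) + CA * a22 * D $ 2 * (exp (- \<theta> * t) * qplus \<theta> t)"
    by (auto simp: algebra_simps intro: order_trans[OF mult_left_mono])
  also have "\<dots> \<le> CA * a21 * D $ 1 * T + CA * a22 * D $ 2 * qminus \<theta> T"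
  proof (intro add_mono mult_left_mono)
    have "exp (- \<theta> * t) \<le> 1"
      using \<theta>_nonneg t by auto
    then show "exp (- \<theta> * t) * t \<le> T"
      using t mult_right_mono[of "exp (- \<theta> * t)" 1 t] by auto
    show "exp (- \<theta> * t) * qplus \<theta> t \<le> qminus \<theta> T"
      using exp_times_qplus qminus_mono[OF \<theta>_nonneg, of t T] t by simp
  qed (use bound_nonneg T_pos a_nonneg D_nonneg in auto)
  also have "\<dots> = M $ 2 $ 1 * D $ 1 + M $ 2 $ 2 * D $ 2"
    by (simp add: Mtheta_nth algebra_simps)
  finally show ?thesis .
qed

lemma pair_dist_le_Nx_Ny:
  assumes "continuous_on {0..T} x" "continuous_on {0..T} y"
      "continuous_on {0..T} x'" "continuous_on {0..T} y'"
    and "pair_dist_le x y x' y' D"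
  shows "pair_dist_le (Nx x y) (Ny x y) (Nx x' y') (Ny x' y') (M *v D)"
  unfolding pair_dist_le_def matrix_vector_mult_nth_2
  using Nx_diff_le[OF assms] Ny_diff_le[OF assms] by blast

text \<open>Clamping to \<open>[0, T]\<close> embeds continuous functions on \<open>[0, T]\<close> into the complete space
  \<open>real \<Rightarrow>\<^sub>C 'a\<close>, where the fixed point is sought.\<close>

definition bcontfun_of :: "(real \<Rightarrow> 'a) \<Rightarrow> real \<Rightarrow>\<^sub>C 'a" where
  "bcontfun_of x = Bcontfun (ext_cont x 0 T)"

lemma clamp_in: "clamp 0 T t \<in> {0..T}"
  using clamp_in_interval[of 0 T t] T_pos by simp

lemma apply_bcontfun_of:
  assumes "continuous_on {0..T} x"
  shows "apply_bcontfun (bcontfun_of x) t = x (clamp 0 T t)"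
  using assms unfolding bcontfun_of_def
  by (simp add: Bcontfun_inverse ext_cont_in_bcontfun) (simp add: ext_cont_def)

definition N :: "(real \<Rightarrow>\<^sub>C 'a) \<times> (real \<Rightarrow>\<^sub>C 'a) \<Rightarrow> (real \<Rightarrow>\<^sub>C 'a) \<times> (real \<Rightarrow>\<^sub>C 'a)" where
  "N p = (bcontfun_of (Nx (fst p) (snd p)), bcontfun_of (Ny (fst p) (snd p)))"

lemma apply_N:
  "apply_bcontfun (fst (N p)) t = Nx (fst p) (snd p) (clamp 0 T t)"
  "apply_bcontfun (snd (N p)) t = Ny (fst p) (snd p) (clamp 0 T t)"
  unfolding N_def by (simp_all add: apply_bcontfun_of continuous_on_Nx_Ny)

lemma pair_dist_le_N:
  fixes p q :: "(real \<Rightarrow>\<^sub>C 'a) \<times> (real \<Rightarrow>\<^sub>C 'a)"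
  assumes "pair_dist_le (fst p) (snd p) (fst q) (snd q) D"
  shows "pair_dist_le (fst (N p)) (snd (N p)) (fst (N q)) (snd (N q)) (M *v D)"
  using pair_dist_le_Nx_Ny[OF _ _ _ _ assms] unfolding pair_dist_le_def apply_N by simp

lemma pair_dist_le_dist:
  fixes p q :: "(real \<Rightarrow>\<^sub>C 'a) \<times> (real \<Rightarrow>\<^sub>C 'a)"
  shows "pair_dist_le (fst p) (snd p) (fst q) (snd q) (vec (dist p q))"
  unfolding pair_dist_le_def
proof (intro ballI conjI)
  fix t :: real assume t: "t \<in> {0..T}"
  have fst: "norm (fst p t - fst q t) \<le> dist p q"
    using dist_bounded[of "fst p" t "fst q"] dist_fst_le[of p q] by (simp add: dist_norm)
  have snd: "norm (snd p t - snd q t) \<le> dist p q"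
    using dist_bounded[of "snd p" t "snd q"] dist_snd_le[of p q] by (simp add: dist_norm)
  have "exp (- \<theta> * t) \<le> 1"
    using \<theta>_nonneg t by auto
  then have "exp (- \<theta> * t) * norm (snd p t - snd q t) \<le> 1 * dist p q"
    using snd by (intro mult_mono) auto
  then show "exp (- \<theta> * t) * norm (snd p t - snd q t) \<le> vec (dist p q) $ 2"
    by simp
  show "norm (fst p t - fst q t) \<le> vec (dist p q) $ 1"
    using fst by simp
qed

lemma dist_N_le:
  fixes p q :: "(real \<Rightarrow>\<^sub>C 'a) \<times> (real \<Rightarrow>\<^sub>C 'a)"
  assumes D: "pair_dist_le (fst (N p)) (snd (N p)) (fst (N q)) (snd (N q)) D"
  shows "dist (N p) (N q) \<le> (1 + exp (\<theta> * T)) * norm D"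
proof -
  have "dist (fst (N p)) (fst (N q)) \<le> D $ 1"
  proof (rule dist_bound)
    fix t
    have "fst (N p) t = fst (N p) (clamp 0 T t)" "fst (N q) t = fst (N q) (clamp 0 T t)"
      using clamp_in clamp_cancel_cbox[of "clamp 0 T t" 0 T] by (simp_all add: apply_N)
    then show "dist (fst (N p) t) (fst (N q) t) \<le> D $ 1"
      using D clamp_in unfolding pair_dist_le_def dist_norm by auto
  qed
  moreover have "dist (snd (N p)) (snd (N q)) \<le> exp (\<theta> * T) * D $ 2"
  proof (rule dist_bound)
    fix t
    define c where "c = clamp 0 T t"
    have "snd (N p) t = snd (N p) c" "snd (N q) t = snd (N q) c"
      using clamp_in clamp_cancel_cbox[of "clamp 0 T t" 0 T] by (simp_all add: apply_N c_def)
    then have "dist (snd (N p) t) (snd (N q) t)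
        = exp (\<theta> * c) * (exp (- \<theta> * c) * norm (snd (N p) c - snd (N q) c))"
      by (simp add: dist_norm mult.assoc[symmetric] exp_add[symmetric])
    also have "\<dots> \<le> exp (\<theta> * T) * D $ 2"
      using D clamp_in \<theta>_nonneg unfolding pair_dist_le_def c_def
      by (intro mult_mono) (auto intro: mult_left_mono)
    finally show "dist (snd (N p) t) (snd (N q) t) \<le> exp (\<theta> * T) * D $ 2" .
  qed
  ultimately have "dist (N p) (N q) \<le> D $ 1 + exp (\<theta> * T) * D $ 2"
    unfolding dist_prod_def
    by (intro order_trans[OF sqrt_sum_squares_le_sum] add_mono) auto
  also have "\<dots> \<le> norm D + exp (\<theta> * T) * norm D"
    using component_le_norm_cart[of D 1] component_le_norm_cart[of D 2]
    by (intro add_mono mult_left_mono) auto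
  finally show ?thesis
    by (simp add: algebra_simps)
qed

lemma unique_fixpoint_N:
  assumes "convergent_to_zero M"
  shows "\<exists>!p. N p = p"
proof (rule vector_contraction_imp_unique_fixpoint[where A = 2 and B = "1 + exp (\<theta> * T)"
      and bound = "\<lambda>p q. pair_dist_le (apply_bcontfun (fst p)) (apply_bcontfun (snd p))
        (apply_bcontfun (fst q)) (apply_bcontfun (snd q))",
      OF assms])
  show "\<exists>D. pair_dist_le (fst p) (snd p) (fst q) (snd q) D \<and> norm D \<le> 2 * dist p q"
    for p q :: "(real \<Rightarrow>\<^sub>C 'a) \<times> (real \<Rightarrow>\<^sub>C 'a)"
  proof (intro exI conjI)
    show "norm (vec (dist p q) :: real^2) \<le> 2 * dist p q"
      using norm_le_l1_cart[of "vec (dist p q) :: real^2"] by simp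
  qed (rule pair_dist_le_dist)
qed (use pair_dist_le_N dist_N_le in \<open>auto intro: add_nonneg_nonneg\<close>)

lemma mild_solution_of_fixpoint:
  assumes "N p = p"
  shows "mild_solution (fst p) (snd p)"
proof -
  have "fst p t = Nx (fst p) (snd p) t \<and> snd p t = Ny (fst p) (snd p) t" if "t \<in> {0..T}" for t
    using apply_N[of p t] clamp_cancel_cbox[of t 0 T] that assms by simp
  then show ?thesis
    unfolding mild_solution_iff_fixpoint by simp
qed

lemma fixpoint_of_mild_solution:
  assumes "mild_solution x y"
  shows "N (bcontfun_of x, bcontfun_of y) = (bcontfun_of x, bcontfun_of y)"
proof -
  have cont: "continuous_on {0..T} x" "continuous_on {0..T} y"
    and eqs: "\<And>t. t \<in> {0..T} \<Longrightarrow> x t = Nx x y t \<and> y t = Ny x y t"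
    using assms unfolding mild_solution_iff_fixpoint by auto
  have "Nx (bcontfun_of x) (bcontfun_of y) t = x t \<and> Ny (bcontfun_of x) (bcontfun_of y) t = y t" if "t \<in> {0..T}" for t
    using Nx_Ny_cong[of "bcontfun_of x" x "bcontfun_of y" y t] eqs[OF that] that cont
    by (simp add: apply_bcontfun_of)
  then show ?thesis
    using cont clamp_in by (intro prod_eqI bcontfun_eqI) (simp_all add: apply_N apply_bcontfun_of)
qed

theorem mild_solution_exists_unique:
  assumes "convergent_to_zero M"
  shows "(\<exists>x y. mild_solution x y) \<and>
    (\<forall>x y x' y'. mild_solution x y \<longrightarrow> mild_solution x' y' \<longrightarrow>
      (\<forall>t\<in>{0..T}. x t = x' t \<and> y t = y' t))"
proof -
  obtain p where fixpoint: "N p = p" and unique: "\<And>q. N q = q \<Longrightarrow> q = p"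
    using unique_fixpoint_N[OF assms] by blast
  from fixpoint have "mild_solution (fst p) (snd p)"
    by (rule mild_solution_of_fixpoint)
  moreover have "x t = x' t \<and> y t = y' t"
    if "mild_solution x y" "mild_solution x' y'" "t \<in> {0..T}" for x y x' y' t
  proof -
    have "(bcontfun_of x, bcontfun_of y) = (bcontfun_of x', bcontfun_of y')"
      using unique fixpoint_of_mild_solution that(1,2) by metis
    then show ?thesis
      using that apply_bcontfun_of clamp_cancel_cbox[of t 0 T] unfolding mild_solution_def
      by (metis cbox_interval prod.inject)
  qed
  ultimately show ?thesis
    by blast
qed

end

theorem mainTheorem3:
  fixes S :: "real \<Rightarrow> ('a::banach \<Rightarrow>\<^sub>L 'a)"
    and A :: "'a \<Rightarrow> 'a" and D :: "'a set"
    and F G :: "'a \<Rightarrow> 'a \<Rightarrow> 'a"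
    and T CA a b k a11 a12 a21 a22 :: real
  assumes T_pos: "T > 0"
    and gen: "is_generator A D S"
    and CA_nonneg: "CA \<ge> 0"
    and CA_bound: "\<forall>t\<in>{0..2*T}. norm (S t) \<le> CA"
    and a_pos: "a > 0" and b_pos: "b > 0" and k_pos: "k > 0"
    and F_cont: "continuous_on UNIV (\<lambda>(x, y). F x y)"
    and G_cont: "continuous_on UNIV (\<lambda>(x, y). G x y)"
    and a_nonneg: "a11 \<ge> 0" "a12 \<ge> 0" "a21 \<ge> 0" "a22 \<ge> 0"
    and F_lip: "\<forall>x xb y yb. norm (F x y - F xb yb) \<le> a11 * norm (x - xb) + a12 * norm (y - yb)"
    and G_lip: "\<forall>x xb y yb. norm (G x y - G xb yb) \<le> a21 * norm (x - xb) + a22 * norm (y - yb)"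
    and conv: "\<exists>\<theta>\<ge>0. convergent_to_zero (Mtheta CA T a k a11 a12 a21 a22 \<theta>)"
  shows "\<forall>\<beta>. let P = (\<lambda>x y.
              continuous_on {0..T} x \<and> continuous_on {0..T} y \<and> y 0 = \<beta> \<and>
              (\<forall>t\<in>{0..T}.
                 x t = blinfun_apply (S t) (x 0)
                       + integral {0..t} (\<lambda>s. blinfun_apply (S (t - s)) (F (x s) (y s))) \<and>
                 y t = blinfun_apply (S t) (y 0)
                       + integral {0..t} (\<lambda>s. blinfun_apply (S (t - s)) (G (x s) (y s)))) \<and>
              x T - a *\<^sub>R x 0 = k *\<^sub>R (y T - b *\<^sub>R y 0))
          in (\<exists>x y. P x y) \<and>
             (\<forall>x y x' y'. P x y \<longrightarrow> P x' y' \<longrightarrow> (\<forall>t\<in>{0..T}. x t = x' t \<and> y t = y' t))"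
proof -
  \<comment> \<open>\<open>F_cont\<close> and \<open>G_cont\<close> follow from the Lipschitz bounds.\<close>
  obtain \<theta> where "0 \<le> \<theta>" and M: "convergent_to_zero (Mtheta CA T a k a11 a12 a21 a22 \<theta>)"
    using conv by blast
  have "C0_semigroup S"
    using gen unfolding is_generator_def by blast
  then have bvp: "coupled_bvp S T CA F G a k a11 a12 a21 a22 \<theta>"
    using T_pos CA_bound a_pos k_pos a_nonneg F_lip G_lip \<open>0 \<le> \<theta>\<close>
    by unfold_locales auto
  show ?thesis
    unfolding Let_def
    by (intro allI coupled_bvp.mild_solution_exists_unique[OF bvp M,
          unfolded coupled_bvp.mild_solution_def[OF bvp]])
qed

end
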